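(* Let $\mathcal{A}$ be a strongly tight GFG-NRW whose language is recognized by some GFG-NBW. Then every state $q$ of $\mathcal{A}$ that appears in some good set of the acceptance condition does not belong to a rejecting cycle of $\mathcal{A}$.
   Context: An automaton $\langle\Sigma,Q,Q_0,\delta,\alpha\rangle$ has $\delta:Q\times\Sigma\to2^Q$; runs are accepting if the set of infinitely visited states satisfies $\alpha$. Rabin ($\alpha$ a set of pairs $\langle E,F\rangle$, $E$ the bad set, $F$ the good set): a set $S$ is accepting iff some pair has $S\cap E=\emptyset$ and $S\cap F\neq\emptyset$. A cycle of $\mathcal{A}$ is a sequence $q_0,\ldots,q_k$ with $q_0=q_k$ and $q_{i+1}\in\delta(q_i,a_i)$ for some letters $a_i$; it is rejecting if its set of states is not accepting. NRW/NBW: nondeterministic Rabin/Büchi word automaton. $\mathcal{A}$ is GFG if there is a strategy $g:\Sigma^*\to Q$ such that for every $w=a_1a_2\cdots$, $g(\epsilon),g(a_1),g(a_1a_2),\ldots$ is a run on $w$, accepting whenever $w\in L(\mathcal{A})$. Finite-state strategies are transducers $g=\langle\Sigma,Q,M,m_0,\rho,\tau\rangle$ (finite memories $M$, $\rho:M\times\Sigma\to M$ extended to words from $m_0$, $\tau:M\to Q$, $g(u)=\tau(\rho(u))$); $m$ is a memory of $q$ if $\tau(m)=q$. $\mathcal{A}_g=\langle\Sigma,M,m_0,\rho,\alpha_g\rangle$ where $\alpha_g$ replaces each set $F$ in $\alpha$ by $\{m\mid\tau(m)\in F\}$. A transition $\langle q,a,q'\rangle$ is used by $g$ if $q=g(u)$,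 $q'=g(ua)$ for some $u$. A combination of paths from a set $P$ of paths is the union of the element sets of a nonempty subset of $P$. For memories $m\neq m'$ with $\tau(m)=\tau(m')$, $m$ is replaceable by $m'$ if the set of paths of $\mathcal{A}_g$ from $m'$ to $m$ is empty or all its combinations are accepting. $\mathcal{A}$ is tight w.r.t. a finite-state strategy $g$ witnessing its GFGness if every transition is used by $g$ and no memory is replaceable by a different memory of the same state. A path of $\mathcal{A}_g$ is $q$-exclusive accepting if its memory set is accepting but that set minus the memories of $q$ is not. $\mathcal{A}$ is strongly tight if for some such $g$ it is tight w.r.t. $g$ and every state $q$ in some good set has a $q$-exclusive accepting cycle in $\mathcal{A}_g$. *)

theory Defs
  imports Main
begin

record ('a, 'q, 'c) automaton =
  alphabet :: "'a set"
  states   :: "'q set"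
  initial  :: "'q set"
  delta    :: "'q \<Rightarrow> 'a \<Rightarrow> 'q set"
  acc      :: 'c

text \<open>Rabin condition: set of pairs (E, F), E bad, F good. Buechi condition: set F.\<close>
type_synonym ('a, 'q) nrw = "('a, 'q, ('q set \<times> 'q set) set) automaton"
type_synonym ('a, 'q) nbw = "('a, 'q, 'q set) automaton"

definition wf_aut :: "('a, 'q, 'c) automaton \<Rightarrow> bool" where
  "wf_aut A \<longleftrightarrow> finite (alphabet A) \<and> finite (states A) \<and> initial A \<subseteq> states A \<and>
     (\<forall>q\<in>states A. \<forall>a\<in>alphabet A. delta A q a \<subseteq> states A)"

definition rabin_accepting :: "('s set \<times> 's set) set \<Rightarrow> 's set \<Rightarrow> bool" where
  "rabin_accepting \<alpha> S \<longleftrightarrow> (\<exists>(E, F)\<in>\<alpha>. S \<inter> E = {} \<and> S \<inter> F \<noteq> {})"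

definition buchi_accepting :: "'s set \<Rightarrow> 's set \<Rightarrow> bool" where
  "buchi_accepting F S \<longleftrightarrow> S \<inter> F \<noteq> {}"

definition is_word :: "('a, 'q, 'c) automaton \<Rightarrow> (nat \<Rightarrow> 'a) \<Rightarrow> bool" where
  "is_word A w \<longleftrightarrow> (\<forall>i. w i \<in> alphabet A)"

definition is_run :: "('a, 'q, 'c) automaton \<Rightarrow> (nat \<Rightarrow> 'a) \<Rightarrow> (nat \<Rightarrow> 'q) \<Rightarrow> bool" where
  "is_run A w r \<longleftrightarrow> r 0 \<in> initial A \<and> (\<forall>i. r (Suc i) \<in> delta A (r i) (w i))"

definition inf_states :: "(nat \<Rightarrow> 'q) \<Rightarrow> 'q set" where
  "inf_states r = {q. \<exists>\<^sub>\<infinity> i. r i = q}"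

definition lang :: "('q set \<Rightarrow> bool) \<Rightarrow> ('a, 'q, 'c) automaton \<Rightarrow> (nat \<Rightarrow> 'a) set" where
  "lang Acc A = {w. is_word A w \<and> (\<exists>r. is_run A w r \<and> Acc (inf_states r))}"

definition rabin_lang :: "('a, 'q) nrw \<Rightarrow> (nat \<Rightarrow> 'a) set" where
  "rabin_lang A = lang (rabin_accepting (acc A)) A"

definition buchi_lang :: "('a, 'q) nbw \<Rightarrow> (nat \<Rightarrow> 'a) set" where
  "buchi_lang A = lang (buchi_accepting (acc A)) A"

definition prefix :: "(nat \<Rightarrow> 'a) \<Rightarrow> nat \<Rightarrow> 'a list" where
  "prefix w i = map w [0..<i]"

definition is_gfg_strategy ::
  "('q set \<Rightarrow> bool) \<Rightarrow> ('a, 'q, 'c) automaton \<Rightarrow> ('a list \<Rightarrow> 'q) \<Rightarrow> bool" where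
  "is_gfg_strategy Acc A g \<longleftrightarrow>
     (\<forall>w. is_word A w \<longrightarrow>
        is_run A w (\<lambda>i. g (prefix w i)) \<and>
        (w \<in> lang Acc A \<longrightarrow> Acc (inf_states (\<lambda>i. g (prefix w i)))))"

definition GFG_NRW :: "('a, 'q) nrw \<Rightarrow> bool" where
  "GFG_NRW A \<longleftrightarrow> wf_aut A \<and> (\<exists>g. is_gfg_strategy (rabin_accepting (acc A)) A g)"

definition GFG_NBW :: "('a, 'q) nbw \<Rightarrow> bool" where
  "GFG_NBW B \<longleftrightarrow> wf_aut B \<and> (\<exists>g. is_gfg_strategy (buchi_accepting (acc B)) B g)"

record ('a, 'q, 'm) transducer =
  mems :: "'m set"
  mem0 :: 'm
  rho  :: "'m \<Rightarrow> 'a \<Rightarrow> 'm"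
  tau  :: "'m \<Rightarrow> 'q"

definition rho_star :: "('a, 'q, 'm) transducer \<Rightarrow> 'a list \<Rightarrow> 'm" where
  "rho_star T u = foldl (rho T) (mem0 T) u"

definition strat :: "('a, 'q, 'm) transducer \<Rightarrow> 'a list \<Rightarrow> 'q" where
  "strat T u = tau T (rho_star T u)"

definition wf_transducer :: "('a, 'q, 'c) automaton \<Rightarrow> ('a, 'q, 'm) transducer \<Rightarrow> bool" where
  "wf_transducer A T \<longleftrightarrow> finite (mems T) \<and> mem0 T \<in> mems T \<and>
     (\<forall>m\<in>mems T. \<forall>a\<in>alphabet A. rho T m a \<in> mems T)"

definition fs_witness :: "('a, 'q) nrw \<Rightarrow> ('a, 'q, 'm) transducer \<Rightarrow> bool" where
  "fs_witness A T \<longleftrightarrow> wf_transducer A T \<and>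
     is_gfg_strategy (rabin_accepting (acc A)) A (strat T)"

text \<open>The acceptance condition alpha_g of A_g (every set replaced by its tau-preimage).\<close>
definition acc_g :: "('a, 'q) nrw \<Rightarrow> ('a, 'q, 'm) transducer \<Rightarrow> ('m set \<times> 'm set) set" where
  "acc_g A T = (\<lambda>(E, F). ({m \<in> mems T. tau T m \<in> E}, {m \<in> mems T. tau T m \<in> F})) ` acc A"

definition used_by :: "('a, 'q, 'c) automaton \<Rightarrow> ('a, 'q, 'm) transducer \<Rightarrow> 'q \<Rightarrow> 'a \<Rightarrow> 'q \<Rightarrow> bool" where
  "used_by A T q a q' \<longleftrightarrow>
     (\<exists>u. set u \<subseteq> alphabet A \<and> q = strat T u \<and> q' = strat T (u @ [a]))"

text \<open>Finite paths of A_g, as nonempty lists of memories.\<close>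
definition mpath :: "('a, 'q, 'c) automaton \<Rightarrow> ('a, 'q, 'm) transducer \<Rightarrow> 'm list \<Rightarrow> bool" where
  "mpath A T ms \<longleftrightarrow> ms \<noteq> [] \<and> set ms \<subseteq> mems T \<and>
     (\<forall>i. Suc i < length ms \<longrightarrow> (\<exists>a\<in>alphabet A. ms ! Suc i = rho T (ms ! i) a))"

definition mpaths_from_to ::
  "('a, 'q, 'c) automaton \<Rightarrow> ('a, 'q, 'm) transducer \<Rightarrow> 'm \<Rightarrow> 'm \<Rightarrow> 'm list set" where
  "mpaths_from_to A T m1 m2 = {ms. mpath A T ms \<and> hd ms = m1 \<and> last ms = m2}"

definition replaceable :: "('a, 'q) nrw \<Rightarrow> ('a, 'q, 'm) transducer \<Rightarrow> 'm \<Rightarrow> 'm \<Rightarrow> bool" where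
  "replaceable A T m m' \<longleftrightarrow> m \<in> mems T \<and> m' \<in> mems T \<and> m \<noteq> m' \<and> tau T m = tau T m' \<and>
     (mpaths_from_to A T m' m = {} \<or>
      (\<forall>P. P \<subseteq> mpaths_from_to A T m' m \<and> P \<noteq> {} \<longrightarrow>
           rabin_accepting (acc_g A T) (\<Union>ms\<in>P. set ms)))"

definition tight_wrt :: "('a, 'q) nrw \<Rightarrow> ('a, 'q, 'm) transducer \<Rightarrow> bool" where
  "tight_wrt A T \<longleftrightarrow> fs_witness A T \<and>
     (\<forall>q\<in>states A. \<forall>a\<in>alphabet A. \<forall>q'\<in>delta A q a. used_by A T q a q') \<and>
     (\<forall>m m'. \<not> replaceable A T m m')"

text \<open>Cycles of A_g: paths of length at least one returning to the start.\<close>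
definition mcycle :: "('a, 'q, 'c) automaton \<Rightarrow> ('a, 'q, 'm) transducer \<Rightarrow> 'm list \<Rightarrow> bool" where
  "mcycle A T ms \<longleftrightarrow> mpath A T ms \<and> length ms \<ge> 2 \<and> hd ms = last ms"

definition excl_accepting_cycle :: "('a, 'q) nrw \<Rightarrow> ('a, 'q, 'm) transducer \<Rightarrow> 'q \<Rightarrow> bool" where
  "excl_accepting_cycle A T q \<longleftrightarrow>
     (\<exists>ms. mcycle A T ms \<and> rabin_accepting (acc_g A T) (set ms) \<and>
        \<not> rabin_accepting (acc_g A T) (set ms - {m. tau T m = q}))"

definition strongly_tight_wrt :: "('a, 'q) nrw \<Rightarrow> ('a, 'q, 'm) transducer \<Rightarrow> bool" where
  "strongly_tight_wrt A T \<longleftrightarrow> tight_wrt A T \<and>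
     (\<forall>q\<in>states A. (\<exists>(E, F)\<in>acc A. q \<in> F) \<longrightarrow> excl_accepting_cycle A T q)"

text \<open>Memories are encoded as natural numbers (any finite memory set can be renamed).\<close>
definition strongly_tight :: "('a, 'q) nrw \<Rightarrow> bool" where
  "strongly_tight A \<longleftrightarrow> (\<exists>T :: ('a, 'q, nat) transducer. strongly_tight_wrt A T)"

definition is_cycle :: "('a, 'q, 'c) automaton \<Rightarrow> 'q list \<Rightarrow> bool" where
  "is_cycle A qs \<longleftrightarrow> length qs \<ge> 2 \<and> set qs \<subseteq> states A \<and> hd qs = last qs \<and>
     (\<forall>i. Suc i < length qs \<longrightarrow> (\<exists>a\<in>alphabet A. qs ! Suc i \<in> delta A (qs ! i) a))"

definition rejecting_cycle :: "('a, 'q) nrw \<Rightarrow> 'q list \<Rightarrow> bool" where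
  "rejecting_cycle A qs \<longleftrightarrow> is_cycle A qs \<and> \<not> rabin_accepting (acc A) (set qs)"

end

(*
  Fix a strongly tight witness T and a good state q on a rejecting cycle C of A. Exclusivity
  yields a memory m of q and an accepting loop x of A_g at m whose set X of states becomes
  rejecting once q is removed. Because T uses every transition and no memory is replaceable,
  C can be followed in A_g from m back to m along a loop y whose set S of states contains C and
  in which every state outside C lies in a rejecting subset of S; hence X \<union> S is rejecting.
  A GFG-NBW for L(A) forbids this: repeating x until the Buechi strategy sees an accepting state
  and then inserting y, forever, gives a word of L(A) on which the run of T visits exactly X \<union> S.
*)
theory Submission
  imports Defs "HOL-Library.Infinite_Set"
begin

lemma successively_iff_nth:
  "successively P xs \<longleftrightarrow> (\<forall>i. Suc i < length xs \<longrightarrow> P (xs ! i) (xs ! Suc i))"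
proof (induction P xs rule: successively.induct)
  case (3 P x y xs)
  have "(\<forall>i. Suc i < length (x # y # xs) \<longrightarrow> P ((x # y # xs) ! i) ((x # y # xs) ! Suc i)) \<longleftrightarrow>
        P x y \<and> (\<forall>i. Suc i < length (y # xs) \<longrightarrow> P ((y # xs) ! i) ((y # xs) ! Suc i))"
    by (metis (no_types, lifting) Suc_less_eq length_Cons not0_implies_Suc nth_Cons_0
        nth_Cons_Suc zero_less_Suc)
  then show ?case using "3.IH" by simp
qed auto

primrec visited :: "('a, 'q, 'm) transducer \<Rightarrow> 'm \<Rightarrow> 'a list \<Rightarrow> 'm set" where
  "visited T \<mu> [] = {\<mu>}"
| "visited T \<mu> (a # u) = insert \<mu> (visited T (rho T \<mu> a) u)"

lemma start_in_visited: "\<mu> \<in> visited T \<mu> u"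
  by (cases u) auto

lemma visited_append:
  "visited T \<mu> (u @ v) = visited T \<mu> u \<union> visited T (foldl (rho T) \<mu> u) v"
  by (induction u arbitrary: \<mu>) (auto simp: start_in_visited)

lemma visited_conv_take:
  "visited T \<mu> u = {foldl (rho T) \<mu> (take k u) | k. k \<le> length u}"
proof (induction u arbitrary: \<mu>)
  case (Cons a u)
  have "{foldl (rho T) \<mu> (take k (a # u)) | k. k \<le> length (a # u)} =
        insert \<mu> {foldl (rho T) (rho T \<mu> a) (take k u) | k. k \<le> length u}"
    by (auto simp: take_Cons' Suc_le_eq)
  then show ?case using Cons.IH by simp
qed simp

lemma foldl_rho_mems:
  assumes "wf_transducer A T" "\<mu> \<in> mems T" "set u \<subseteq> alphabet A"
  shows "foldl (rho T) \<mu> u \<in> mems T \<and> visited T \<mu> u \<subseteq> mems T"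
  using assms(2,3)
proof (induction u arbitrary: \<mu>)
  case (Cons a u)
  then have "rho T \<mu> a \<in> mems T" using assms(1) unfolding wf_transducer_def by auto
  then show ?case using Cons by simp
qed simp

lemma rho_star_mems:
  assumes "wf_transducer A T" "set u \<subseteq> alphabet A"
  shows "rho_star T u \<in> mems T"
  using foldl_rho_mems[OF assms(1) _ assms(2)] assms(1)
  unfolding rho_star_def wf_transducer_def by blast

lemma foldl_rho_power:
  assumes "foldl (rho T) m x = m"
  shows "foldl (rho T) m (concat (replicate k x)) = m"
  using assms by (induction k) auto

lemma visited_power:
  assumes "foldl (rho T) m x = m"
  shows "visited T m (concat (replicate (Suc k) x)) = visited T m x"
  using assms foldl_rho_power[OF assms] start_in_visited[of m T x]
  by (induction k) (auto simp: visited_append)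

lemma append_concat_replicate: "x @ concat (replicate k x) = concat (replicate k x) @ x"
  by (induction k) auto

section \<open>Walks in the automaton of a strategy\<close>

abbreviation mem_step :: "('a, 'q, 'c) automaton \<Rightarrow> ('a, 'q, 'm) transducer \<Rightarrow> 'm \<Rightarrow> 'm \<Rightarrow> bool"
  where "mem_step A T \<mu> \<nu> \<equiv> \<exists>a\<in>alphabet A. \<nu> = rho T \<mu> a"

abbreviation state_step :: "('a, 'q, 'c) automaton \<Rightarrow> 'q \<Rightarrow> 'q \<Rightarrow> bool"
  where "state_step A s s' \<equiv> \<exists>a\<in>alphabet A. s' \<in> delta A s a"

definition walk :: "('a, 'q, 'c) automaton \<Rightarrow> ('a, 'q, 'm) transducer \<Rightarrow> 'm \<Rightarrow> 'm \<Rightarrow> 'm set \<Rightarrow> bool"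
  where "walk A T \<mu> \<nu> S \<longleftrightarrow>
    (\<exists>u. set u \<subseteq> alphabet A \<and> foldl (rho T) \<mu> u = \<nu> \<and> visited T \<mu> u = S)"

lemma walk_refl: "walk A T \<mu> \<mu> {\<mu>}"
  unfolding walk_def by (intro exI[of _ "[]"]) simp

lemma walk_step: "a \<in> alphabet A \<Longrightarrow> walk A T \<mu> (rho T \<mu> a) {\<mu>, rho T \<mu> a}"
  unfolding walk_def by (intro exI[of _ "[a]"]) auto

lemma walk_trans:
  assumes "walk A T \<mu> \<nu> S" "walk A T \<nu> \<kappa> S'"
  shows "walk A T \<mu> \<kappa> (S \<union> S')"
proof -
  obtain u where "set u \<subseteq> alphabet A" "foldl (rho T) \<mu> u = \<nu>" "visited T \<mu> u = S"
    using assms(1) unfolding walk_def by blast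
  moreover obtain v where "set v \<subseteq> alphabet A" "foldl (rho T) \<nu> v = \<kappa>" "visited T \<nu> v = S'"
    using assms(2) unfolding walk_def by blast
  ultimately show ?thesis unfolding walk_def by (intro exI[of _ "u @ v"]) (simp add: visited_append)
qed

lemma walk_start: "walk A T \<mu> \<nu> S \<Longrightarrow> \<mu> \<in> S"
  unfolding walk_def using start_in_visited by auto

lemma walk_mems: "wf_transducer A T \<Longrightarrow> \<mu> \<in> mems T \<Longrightarrow> walk A T \<mu> \<nu> S \<Longrightarrow> S \<subseteq> mems T"
  unfolding walk_def using foldl_rho_mems[of A T \<mu>] by blast

text \<open>Combinations of walks, as in the definition of replaceability.\<close>
definition multiwalk :: "('a, 'q, 'c) automaton \<Rightarrow> ('a, 'q, 'm) transducer \<Rightarrow> 'm \<Rightarrow> 'm \<Rightarrow> 'm set \<Rightarrow> bool"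
  where "multiwalk A T \<mu> \<nu> X \<longleftrightarrow> (\<exists>Ss. Ss \<noteq> {} \<and> (\<forall>S\<in>Ss. walk A T \<mu> \<nu> S) \<and> \<Union>Ss = X)"

lemma multiwalk_walk: "walk A T \<mu> \<nu> S \<Longrightarrow> multiwalk A T \<mu> \<nu> S"
  unfolding multiwalk_def by (intro exI[of _ "{S}"]) simp

lemma multiwalk_start:
  assumes "multiwalk A T \<mu> \<nu> X"
  shows "\<mu> \<in> X"
proof -
  obtain Ss where Ss: "Ss \<noteq> {}" "\<forall>S\<in>Ss. walk A T \<mu> \<nu> S" "\<Union>Ss = X"
    using assms unfolding multiwalk_def by (elim exE conjE)
  then obtain S where S: "S \<in> Ss" by auto
  then have "\<mu> \<in> S" using Ss(2) by (blast intro: walk_start)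
  then show ?thesis using S Ss(3) by blast
qed

lemma multiwalk_trans:
  assumes "multiwalk A T \<mu> \<nu> X" "multiwalk A T \<nu> \<kappa> Y"
  shows "multiwalk A T \<mu> \<kappa> (X \<union> Y)"
proof -
  obtain Ss where Ss: "Ss \<noteq> {}" "\<forall>S\<in>Ss. walk A T \<mu> \<nu> S" "\<Union>Ss = X"
    using assms(1) unfolding multiwalk_def by (elim exE conjE)
  obtain Ss' where Ss': "Ss' \<noteq> {}" "\<forall>S\<in>Ss'. walk A T \<nu> \<kappa> S" "\<Union>Ss' = Y"
    using assms(2) unfolding multiwalk_def by (elim exE conjE)
  define Rs where "Rs = {S \<union> S' | S S'. S \<in> Ss \<and> S' \<in> Ss'}"
  have "\<Union>Rs = X \<union> Y"
  proof
    show "\<Union>Rs \<subseteq> X \<union> Y" using Ss(3) Ss'(3) unfolding Rs_def by auto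
    show "X \<union> Y \<subseteq> \<Union>Rs"
    proof
      fix z assume "z \<in> X \<union> Y"
      then obtain S S' where "S \<in> Ss" "S' \<in> Ss'" "z \<in> S \<union> S'"
        using Ss(1,3) Ss'(1,3) by blast
      then show "z \<in> \<Union>Rs" unfolding Rs_def by blast
    qed
  qed
  moreover have "\<forall>R\<in>Rs. walk A T \<mu> \<kappa> R"
    unfolding Rs_def using Ss(2) Ss'(2) by (auto intro!: walk_trans[of A T \<mu> \<nu>])
  moreover have "Rs \<noteq> {}" using Ss(1) Ss'(1) unfolding Rs_def by blast
  ultimately show ?thesis unfolding multiwalk_def by (intro exI[of _ Rs]) simp
qed

text \<open>Loops can be concatenated, and only finitely many sets of memories exist.\<close>
lemma multiwalk_loop_walk:
  assumes "wf_transducer A T" "m \<in> mems T" "multiwalk A T m m X"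
  shows "walk A T m m X"
proof -
  obtain Ss where Ss: "Ss \<noteq> {}" "\<forall>S\<in>Ss. walk A T m m S" "\<Union>Ss = X"
    using assms(3) unfolding multiwalk_def by (elim exE conjE)
  have "Ss \<subseteq> Pow (mems T)" using Ss(2) walk_mems[OF assms(1,2), of m] by auto
  then have "finite Ss" using assms(1) unfolding wf_transducer_def by (meson finite_Pow_iff finite_subset)
  from this Ss(1,2) have "walk A T m m (\<Union>Ss)"
  proof (induction Ss rule: finite_ne_induct)
    case (insert S Ss)
    then show ?case using walk_trans[of A T m m S m "\<Union>Ss"] by simp
  qed simp
  then show ?thesis using Ss(3) by simp
qed

lemma mpath_iff_successively:
  "mpath A T ms \<longleftrightarrow>
     ms \<noteq> [] \<and> set ms \<subseteq> mems T \<and> successively (mem_step A T) ms"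
  unfolding mpath_def successively_iff_nth ..

lemma successively_mem_step_word:
  assumes "successively (mem_step A T) (\<mu> # ms)"
  shows "\<exists>u. set u \<subseteq> alphabet A \<and> length u = length ms \<and>
           foldl (rho T) \<mu> u = last (\<mu> # ms) \<and> visited T \<mu> u = set (\<mu> # ms)"
  using assms
proof (induction ms arbitrary: \<mu>)
  case (Cons \<nu> ms)
  have step: "mem_step A T \<mu> \<nu>"
    and rest: "successively (mem_step A T) (\<nu> # ms)"
    using Cons.prems by auto
  obtain a where "a \<in> alphabet A" "\<nu> = rho T \<mu> a" using step by blast
  moreover obtain u where "set u \<subseteq> alphabet A" "length u = length ms"
    "foldl (rho T) \<nu> u = last (\<nu> # ms)" "visited T \<nu> u = set (\<nu> # ms)"
    using Cons.IH[OF rest] by blast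
  ultimately show ?case by (intro exI[of _ "a # u"]) auto
qed (auto intro: exI[of _ "[]"])

lemma mpath_walk:
  assumes "mpath A T ms"
  shows "walk A T (hd ms) (last ms) (set ms)"
proof -
  obtain \<mu> ms' where ms: "ms = \<mu> # ms'"
    using assms unfolding mpath_def by (cases ms) auto
  then show ?thesis
    using assms successively_mem_step_word[of A T \<mu> ms'] unfolding mpath_iff_successively walk_def
    by auto
qed

lemma mcycle_loop_word:
  assumes D: "mcycle A T D" and m: "m \<in> set D"
  shows "\<exists>x. set x \<subseteq> alphabet A \<and> x \<noteq> [] \<and> foldl (rho T) m x = m \<and> visited T m x = set D"
proof -
  have D': "successively (mem_step A T) D" "2 \<le> length D" "hd D = last D"
    using D unfolding mcycle_def mpath_iff_successively by simp_all
  obtain xs ys where split: "D = xs @ m # ys" using m split_list by metis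
  obtain c cs where ccs: "xs @ [m] = c # cs" by (cases "xs @ [m]") auto
  have path1: "successively (mem_step A T) (m # ys)"
    using D'(1) unfolding split by (simp add: successively_append_iff)
  obtain u1 where u1: "set u1 \<subseteq> alphabet A" "length u1 = length ys"
      "foldl (rho T) m u1 = last (m # ys)" "visited T m u1 = set (m # ys)"
    using successively_mem_step_word[OF path1] by blast
  have "D = (c # cs) @ ys" using split ccs by simp
  then have path2: "successively (mem_step A T) (c # cs)" using D'(1) by (simp only: successively_append_iff)
  obtain u2 where u2: "set u2 \<subseteq> alphabet A" "length u2 = length cs"
      "foldl (rho T) c u2 = last (c # cs)" "visited T c u2 = set (c # cs)"
    using successively_mem_step_word[OF path2] by blast
  have "last (m # ys) = c" using D'(3) ccs unfolding split by (cases xs) auto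
  moreover have "last (c # cs) = m" using ccs last_snoc[of xs m] by simp
  moreover have "length xs = length cs" using arg_cong[OF ccs, of length] by simp
  then have "length ys + length cs \<noteq> 0" using D'(2) unfolding split by auto
  moreover have "set (m # ys) \<union> set (c # cs) = set D" unfolding split ccs[symmetric] by auto
  ultimately show ?thesis
    using u1 u2 by (intro exI[of _ "u1 @ u2"]) (auto simp: visited_append)
qed

section \<open>Rabin conditions\<close>

lemma rabin_accepting_acc_g:
  assumes "M \<subseteq> mems T"
  shows "rabin_accepting (acc_g A T) M \<longleftrightarrow> rabin_accepting (acc A) (tau T ` M)"
proof
  assume "rabin_accepting (acc_g A T) M"
  then obtain E F where EF: "(E, F) \<in> acc A"
    "M \<inter> {m \<in> mems T. tau T m \<in> E} = {}" "M \<inter> {m \<in> mems T. tau T m \<in> F} \<noteq> {}"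
    unfolding rabin_accepting_def acc_g_def by auto
  then have "tau T ` M \<inter> E = {}" "tau T ` M \<inter> F \<noteq> {}" using assms by auto
  then show "rabin_accepting (acc A) (tau T ` M)" using EF(1) unfolding rabin_accepting_def
    by (intro bexI[of _ "(E, F)"]) auto
next
  assume "rabin_accepting (acc A) (tau T ` M)"
  then obtain E F where EF: "(E, F) \<in> acc A" "tau T ` M \<inter> E = {}" "tau T ` M \<inter> F \<noteq> {}"
    unfolding rabin_accepting_def by auto
  then have "M \<inter> {m \<in> mems T. tau T m \<in> E} = {}" "M \<inter> {m \<in> mems T. tau T m \<in> F} \<noteq> {}"
    using assms by auto
  moreover have "({m \<in> mems T. tau T m \<in> E}, {m \<in> mems T. tau T m \<in> F}) \<in> acc_g A T"
    using EF(1) unfolding acc_g_def by (rule rev_image_eqI) simp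
  ultimately show "rabin_accepting (acc_g A T) M" unfolding rabin_accepting_def
    by (intro bexI[of _ "({m \<in> mems T. tau T m \<in> E}, {m \<in> mems T. tau T m \<in> F})"]) auto
qed

text \<open>Unlike rejection, this is preserved under unions.\<close>
definition covered_by_rejecting :: "('s set \<times> 's set) set \<Rightarrow> 's set \<Rightarrow> 's set \<Rightarrow> bool" where
  "covered_by_rejecting \<alpha> C S \<longleftrightarrow> (\<forall>s\<in>S - C. \<exists>R\<subseteq>S. s \<in> R \<and> \<not> rabin_accepting \<alpha> R)"

lemma covered_by_rejecting_Un:
  assumes "covered_by_rejecting \<alpha> C S" "covered_by_rejecting \<alpha> C S'"
  shows "covered_by_rejecting \<alpha> C (S \<union> S')"
  unfolding covered_by_rejecting_def
proof
  fix s assume "s \<in> S \<union> S' - C"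
  then consider "s \<in> S - C" | "s \<in> S' - C" by blast
  then show "\<exists>R\<subseteq>S \<union> S'. s \<in> R \<and> \<not> rabin_accepting \<alpha> R"
  proof cases
    case 1
    then obtain R where "R \<subseteq> S" "s \<in> R" "\<not> rabin_accepting \<alpha> R"
      using assms(1) unfolding covered_by_rejecting_def by blast
    then show ?thesis by blast
  next
    case 2
    then obtain R where "R \<subseteq> S'" "s \<in> R" "\<not> rabin_accepting \<alpha> R"
      using assms(2) unfolding covered_by_rejecting_def by blast
    then show ?thesis by blast
  qed
qed

lemma covered_by_rejecting_mono:
  "covered_by_rejecting \<alpha> C S \<Longrightarrow> C \<subseteq> C' \<Longrightarrow> covered_by_rejecting \<alpha> C' S"
  unfolding covered_by_rejecting_def by blast

lemma covered_by_rejecting_subset: "S \<subseteq> C \<Longrightarrow> covered_by_rejecting \<alpha> C S"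
  unfolding covered_by_rejecting_def by auto

lemma covered_by_rejecting_rejecting: "\<not> rabin_accepting \<alpha> S \<Longrightarrow> covered_by_rejecting \<alpha> C S"
  unfolding covered_by_rejecting_def by auto

lemma rabin_acceptingI:
  "(E, F) \<in> \<alpha> \<Longrightarrow> S \<inter> E = {} \<Longrightarrow> S \<inter> F \<noteq> {} \<Longrightarrow> rabin_accepting \<alpha> S"
  unfolding rabin_accepting_def by blast

lemma rabin_rejecting_Un:
  assumes "\<not> rabin_accepting \<alpha> (X - {q})" "q \<in> S" "C \<subseteq> S" "\<not> rabin_accepting \<alpha> C"
    and "covered_by_rejecting \<alpha> C S"
  shows "\<not> rabin_accepting \<alpha> (X \<union> S)"
proof
  assume "rabin_accepting \<alpha> (X \<union> S)"
  then obtain E F where EF: "(E, F) \<in> \<alpha>" "(X \<union> S) \<inter> E = {}" "(X \<union> S) \<inter> F \<noteq> {}"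
    unfolding rabin_accepting_def by auto
  have "(X - {q}) \<inter> F = {}"
    using assms(1) rabin_acceptingI[OF EF(1), of "X - {q}"] EF(2) by blast
  then obtain s where s: "s \<in> S" "s \<in> F" using EF(3) assms(2) by blast
  obtain R where R: "R \<subseteq> S" "s \<in> R" "\<not> rabin_accepting \<alpha> R"
  proof (cases "s \<in> C")
    case True
    then show thesis using that assms(3,4) by blast
  next
    case False
    then show thesis using that s(1) assms(5) unfolding covered_by_rejecting_def by blast
  qed
  have "R \<inter> E = {}" "R \<inter> F \<noteq> {}" using R(1,2) s(2) EF(2) by auto
  then show False using R(3) rabin_acceptingI[OF EF(1)] by blast
qed

section \<open>Tight strategies\<close>

lemma tight_wf_transducer: "tight_wrt A T \<Longrightarrow> wf_transducer A T"
  unfolding tight_wrt_def fs_witness_def by simp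

text \<open>Non-replaceability of \<open>\<beta>\<close> by \<open>\<alpha>\<close> yields paths from \<open>\<alpha>\<close> to \<open>\<beta>\<close> with a rejecting combination.\<close>
lemma tight_multiwalk:
  assumes tight: "tight_wrt A T" and "\<alpha> \<in> mems T" "\<beta> \<in> mems T" "tau T \<alpha> = tau T \<beta>"
  shows "\<exists>X. multiwalk A T \<alpha> \<beta> X \<and> covered_by_rejecting (acc A) {tau T \<alpha>} (tau T ` X)"
proof (cases "\<alpha> = \<beta>")
  case True
  have "multiwalk A T \<alpha> \<beta> {\<alpha>}" using True multiwalk_walk[OF walk_refl] by simp
  moreover have "covered_by_rejecting (acc A) {tau T \<alpha>} (tau T ` {\<alpha>})"
    by (intro covered_by_rejecting_subset) simp
  ultimately show ?thesis by blast
next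
  case False
  have "\<not> replaceable A T \<beta> \<alpha>" using tight unfolding tight_wrt_def by simp
  then obtain P where P: "P \<subseteq> mpaths_from_to A T \<alpha> \<beta>" "P \<noteq> {}"
    "\<not> rabin_accepting (acc_g A T) (\<Union>ms\<in>P. set ms)"
    using assms False unfolding replaceable_def by auto
  have "walk A T \<alpha> \<beta> (set ms)" if "ms \<in> P" for ms
    using that P(1) mpath_walk[of A T ms] unfolding mpaths_from_to_def by auto
  then have "multiwalk A T \<alpha> \<beta> (\<Union>ms\<in>P. set ms)"
    unfolding multiwalk_def using P(2) by (intro exI[of _ "set ` P"]) auto
  moreover have "(\<Union>ms\<in>P. set ms) \<subseteq> mems T"
    using P(1) unfolding mpaths_from_to_def mpath_def by auto
  then have "\<not> rabin_accepting (acc A) (tau T ` (\<Union>ms\<in>P. set ms))"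
    using P(3) rabin_accepting_acc_g by blast
  then have "covered_by_rejecting (acc A) {tau T \<alpha>} (tau T ` (\<Union>ms\<in>P. set ms))"
    by (rule covered_by_rejecting_rejecting)
  ultimately show ?thesis by blast
qed

lemma tight_memory_reachable:
  assumes tight: "tight_wrt A T" and u: "set u \<subseteq> alphabet A"
    and m: "m \<in> mems T" "tau T m = strat T u"
  shows "\<exists>p. set p \<subseteq> alphabet A \<and> rho_star T p = m"
proof -
  obtain X where "multiwalk A T (rho_star T u) m X"
    using tight_multiwalk[OF tight rho_star_mems[OF tight_wf_transducer[OF tight] u] m(1)] m(2)
    by (auto simp: strat_def)
  then obtain S where "walk A T (rho_star T u) m S"
    unfolding multiwalk_def by blast
  then obtain v where "set v \<subseteq> alphabet A" "foldl (rho T) (rho_star T u) v = m"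
    unfolding walk_def by blast
  then show ?thesis using u by (intro exI[of _ "u @ v"]) (simp add: rho_star_def)
qed

lemma tight_cycle_state_visited:
  assumes tight: "tight_wrt A T" and cyc: "is_cycle A qs" and q: "q \<in> set qs"
  shows "\<exists>u. set u \<subseteq> alphabet A \<and> strat T u = q"
proof -
  obtain i where i: "i < length qs" "qs ! i = q" using q by (meson in_set_conv_nth)
  have "\<exists>j. Suc j < length qs \<and> qs ! j = q"
  proof (cases "Suc i < length qs")
    case False
    then have "i = length qs - 1" "qs \<noteq> []" using i(1) by auto
    then have "q = last qs" using i(2) by (simp add: last_conv_nth)
    moreover have "qs ! 0 = last qs" using cyc \<open>qs \<noteq> []\<close> unfolding is_cycle_def by (simp add: hd_conv_nth)
    moreover have "Suc 0 < length qs" using cyc unfolding is_cycle_def by simp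
    ultimately show ?thesis by blast
  qed (use i in blast)
  then obtain j where j: "Suc j < length qs" "qs ! j = q" by blast
  then obtain a q' where "a \<in> alphabet A" "q' \<in> delta A q a"
    using cyc unfolding is_cycle_def by blast
  moreover have "q \<in> states A" using cyc q unfolding is_cycle_def by blast
  ultimately have "used_by A T q a q'" using tight unfolding tight_wrt_def by simp
  then show ?thesis unfolding used_by_def by auto
qed

text \<open>Some memory of \<open>c\<close> takes the transition, since \<open>T\<close> uses it; \<open>\<nu>\<close> reaches that memory by
  \<open>tight_multiwalk\<close>.\<close>
lemma tight_step_multiwalk:
  assumes tight: "tight_wrt A T" and a: "a \<in> alphabet A" "c' \<in> delta A c a" "c \<in> states A"
    and \<nu>: "\<nu> \<in> mems T" "tau T \<nu> = c"
  shows "\<exists>\<nu>' X. \<nu>' \<in> mems T \<and> tau T \<nu>' = c' \<and> multiwalk A T \<nu> \<nu>' X \<and> c \<in> tau T ` X \<and>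
           covered_by_rejecting (acc A) {c, c'} (tau T ` X)"
proof -
  have wf: "wf_transducer A T" by (rule tight_wf_transducer[OF tight])
  have "used_by A T c a c'" using tight a unfolding tight_wrt_def by simp
  then obtain u where u: "set u \<subseteq> alphabet A" "c = strat T u" "c' = strat T (u @ [a])"
    unfolding used_by_def by blast
  define \<mu> where "\<mu> = rho_star T u"
  have \<mu>: "\<mu> \<in> mems T" "tau T \<mu> = c"
    using rho_star_mems[OF wf u(1)] u(2) by (simp_all add: strat_def \<mu>_def)
  have \<mu>a: "rho T \<mu> a \<in> mems T" "tau T (rho T \<mu> a) = c'"
    using rho_star_mems[OF wf, of "u @ [a]"] u a by (simp_all add: strat_def rho_star_def \<mu>_def)
  obtain X where X: "multiwalk A T \<nu> \<mu> X" "covered_by_rejecting (acc A) {c} (tau T ` X)"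
    using tight_multiwalk[OF tight \<nu>(1) \<mu>(1)] \<nu>(2) \<mu>(2) by auto
  have "multiwalk A T \<nu> (rho T \<mu> a) (X \<union> {\<mu>, rho T \<mu> a})"
    by (rule multiwalk_trans[OF X(1) multiwalk_walk[OF walk_step[OF a(1)]]])
  moreover have "c \<in> tau T ` X" using multiwalk_start[OF X(1)] \<nu>(2) by blast
  moreover have "covered_by_rejecting (acc A) {c, c'} (tau T ` (X \<union> {\<mu>, rho T \<mu> a}))"
    unfolding image_Un using \<mu>(2) \<mu>a(2)
    by (intro covered_by_rejecting_Un covered_by_rejecting_mono[OF X(2)] covered_by_rejecting_subset)
      auto
  ultimately show ?thesis using \<mu>a by (intro exI[of _ "rho T \<mu> a"] exI[of _ "X \<union> {\<mu>, rho T \<mu> a}"]) auto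
qed

lemma tight_path_multiwalk:
  assumes tight: "tight_wrt A T" and "successively (state_step A) (c # cs)"
    and "set (c # cs) \<subseteq> states A" "set (c # cs) \<subseteq> C" "\<nu> \<in> mems T" "tau T \<nu> = c"
  shows "\<exists>\<nu>' X. \<nu>' \<in> mems T \<and> tau T \<nu>' = last (c # cs) \<and> multiwalk A T \<nu> \<nu>' X \<and>
           set (c # cs) \<subseteq> tau T ` X \<and> covered_by_rejecting (acc A) C (tau T ` X)"
  using assms(2-)
proof (induction cs arbitrary: c \<nu>)
  case Nil
  have "multiwalk A T \<nu> \<nu> {\<nu>}" by (rule multiwalk_walk[OF walk_refl])
  moreover have "covered_by_rejecting (acc A) C (tau T ` {\<nu>})"
    using Nil.prems by (intro covered_by_rejecting_subset) simp
  ultimately show ?case using Nil.prems by (intro exI[of _ \<nu>] exI[of _ "{\<nu>}"]) auto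
next
  case (Cons c' cs)
  obtain a where a: "a \<in> alphabet A" "c' \<in> delta A c a" using Cons.prems(1) by auto
  obtain \<nu>1 X1 where X1: "\<nu>1 \<in> mems T" "tau T \<nu>1 = c'" "multiwalk A T \<nu> \<nu>1 X1" "c \<in> tau T ` X1"
      "covered_by_rejecting (acc A) {c, c'} (tau T ` X1)"
    using tight_step_multiwalk[OF tight a _ Cons.prems(4,5)] Cons.prems(2) by auto
  have "successively (state_step A) (c' # cs)" using Cons.prems(1) by simp
  then obtain \<nu>' X2 where X2: "\<nu>' \<in> mems T" "tau T \<nu>' = last (c' # cs)" "multiwalk A T \<nu>1 \<nu>' X2"
      "set (c' # cs) \<subseteq> tau T ` X2" "covered_by_rejecting (acc A) C (tau T ` X2)"
    using Cons.IH[OF _ _ _ X1(1,2)] Cons.prems(2,3) by auto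
  have "covered_by_rejecting (acc A) C (tau T ` (X1 \<union> X2))"
    unfolding image_Un using Cons.prems(3)
    by (intro covered_by_rejecting_Un covered_by_rejecting_mono[OF X1(5)] X2(5)) auto
  then show ?case using X1(4) X2 multiwalk_trans[OF X1(3) X2(3)]
    by (intro exI[of _ \<nu>'] exI[of _ "X1 \<union> X2"]) auto
qed

lemma tight_rejecting_cycle_loop:
  assumes tight: "tight_wrt A T" and cyc: "rejecting_cycle A qs"
    and m: "m \<in> mems T" "tau T m \<in> set qs"
  shows "\<exists>V. walk A T m m V \<and> set qs \<subseteq> tau T ` V \<and>
           covered_by_rejecting (acc A) (set qs) (tau T ` V)"
proof -
  have qs: "successively (state_step A) qs" "set qs \<subseteq> states A" "hd qs = last qs"
    using cyc unfolding rejecting_cycle_def is_cycle_def successively_iff_nth by simp_all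
  obtain xs ys where split: "qs = xs @ tau T m # ys" using m(2) split_list by metis
  obtain c cs where ccs: "xs @ [tau T m] = c # cs" by (cases "xs @ [tau T m]") auto
  have path1: "successively (state_step A) (tau T m # ys)"
    using qs(1) unfolding split by (simp add: successively_append_iff)
  have path2: "successively (state_step A) (c # cs)"
  proof -
    have "qs = (c # cs) @ ys" using split ccs by simp
    then show ?thesis using qs(1) by (simp only: successively_append_iff)
  qed
  have sets: "set qs = set (tau T m # ys) \<union> set (c # cs)"
    unfolding split ccs[symmetric] by auto
  obtain \<nu>1 X1 where X1: "\<nu>1 \<in> mems T" "tau T \<nu>1 = last (tau T m # ys)" "multiwalk A T m \<nu>1 X1"
    "set (tau T m # ys) \<subseteq> tau T ` X1" "covered_by_rejecting (acc A) (set qs) (tau T ` X1)"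
    using tight_path_multiwalk[OF tight path1, of "set qs" m] qs(2) sets m(1) by auto
  have "tau T \<nu>1 = c"
    using X1(2) qs(3) ccs unfolding split by (cases xs) auto
  then obtain \<nu>2 X2 where X2: "\<nu>2 \<in> mems T" "tau T \<nu>2 = last (c # cs)" "multiwalk A T \<nu>1 \<nu>2 X2"
    "set (c # cs) \<subseteq> tau T ` X2" "covered_by_rejecting (acc A) (set qs) (tau T ` X2)"
    using tight_path_multiwalk[OF tight path2, of "set qs" \<nu>1] qs(2) sets X1(1) by auto
  have "tau T \<nu>2 = tau T m" using X2(2) ccs by (metis last_snoc)
  then obtain X3 where X3: "multiwalk A T \<nu>2 m X3" "covered_by_rejecting (acc A) {tau T m} (tau T ` X3)"
    using tight_multiwalk[OF tight X2(1) m(1)] by auto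
  have "covered_by_rejecting (acc A) (set qs) (tau T ` X3)"
    by (rule covered_by_rejecting_mono[OF X3(2)]) (use m(2) in simp)
  then have "covered_by_rejecting (acc A) (set qs) (tau T ` (X1 \<union> X2 \<union> X3))"
    unfolding image_Un by (intro covered_by_rejecting_Un X1(5) X2(5))
  moreover have "walk A T m m (X1 \<union> X2 \<union> X3)"
    by (rule multiwalk_loop_walk[OF tight_wf_transducer[OF tight] m(1) multiwalk_trans[OF multiwalk_trans[OF X1(3) X2(3)] X3(1)]])
  moreover have "set qs \<subseteq> tau T ` (X1 \<union> X2 \<union> X3)" using X1(4) X2(4) sets by auto
  ultimately show ?thesis by blast
qed

section \<open>Infinite words as limits of prefix chains\<close>

definition limit_word :: "(nat \<Rightarrow> 'a list) \<Rightarrow> nat \<Rightarrow> 'a" where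
  "limit_word pre j = pre (Suc j) ! j"

locale prefix_chain =
  fixes pre :: "nat \<Rightarrow> 'a list" and blk :: "nat \<Rightarrow> 'a list"
  assumes pre_Suc: "pre (Suc i) = pre i @ blk i"
    and blk_nonempty: "blk i \<noteq> []"
begin

lemma length_pre_ge: "i \<le> length (pre i)"
proof (induction i)
  case (Suc i)
  have "length (blk i) > 0" using blk_nonempty[of i] by simp
  moreover have "length (pre (Suc i)) = length (pre i) + length (blk i)" by (simp add: pre_Suc)
  ultimately show ?case using Suc.IH by linarith
qed simp

lemma pre_mono: "i \<le> j \<Longrightarrow> \<exists>z. pre j = pre i @ z"
proof (induction j rule: dec_induct)
  case (step j)
  then show ?case by (metis append.assoc pre_Suc)
qed simp

lemma prefix_limit_word:
  assumes "l \<le> length (pre i)"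
  shows "prefix (limit_word pre) l = take l (pre i)"
proof (rule nth_equalityI)
  fix t assume "t < length (prefix (limit_word pre) l)"
  then have t: "t < l" by (simp add: prefix_def)
  obtain z where z: "pre (max i (Suc t)) = pre i @ z" using pre_mono by fastforce
  obtain z' where z': "pre (max i (Suc t)) = pre (Suc t) @ z'" using pre_mono by fastforce
  have "t < length (pre (Suc t))" using length_pre_ge[of "Suc t"] by simp
  then have "pre (Suc t) ! t = pre i ! t"
    using z z' t assms by (metis nth_append order_less_le_trans)
  then show "prefix (limit_word pre) l ! t = take l (pre i) ! t"
    using t by (simp add: prefix_def limit_word_def)
qed (use assms in \<open>simp add: prefix_def\<close>)

lemma prefix_limit_word_block:
  "k \<le> length (blk i) \<Longrightarrow> prefix (limit_word pre) (length (pre i) + k) = pre i @ take k (blk i)"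
  using prefix_limit_word[of "length (pre i) + k" "Suc i"] by (simp add: pre_Suc)

lemma limit_word_in: "(\<And>i. set (pre i) \<subseteq> S) \<Longrightarrow> limit_word pre j \<in> S"
  using length_pre_ge[of "Suc j"] unfolding limit_word_def by (meson Suc_le_eq nth_mem subsetD)

lemma in_block:
  assumes "length (pre 0) \<le> l"
  shows "\<exists>i k. k < length (blk i) \<and> l = length (pre i) + k"
proof -
  have "\<exists>i. l < length (pre i)" using length_pre_ge[of "Suc l"] by (intro exI[of _ "Suc l"]) simp
  define j where "j = (LEAST i. l < length (pre i))"
  have j: "l < length (pre j)" unfolding j_def by (rule LeastI_ex) fact
  have "j \<noteq> 0" using j assms unfolding j_def by (metis not_le)
  then obtain i where i: "j = Suc i" using not0_implies_Suc by blast
  have "\<not> l < length (pre i)" using i unfolding j_def by (metis Least_le lessI not_le)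
  then show ?thesis using j i by (intro exI[of _ i] exI[of _ "l - length (pre i)"]) (auto simp: pre_Suc)
qed

lemma inf_states_strat_limit_word:
  assumes run: "\<And>i. rho_star T (pre i) = m" and blocks: "\<And>i. visited T m (blk i) = Z"
  shows "inf_states (\<lambda>l. strat T (prefix (limit_word pre) l)) = tau T ` Z"
proof -
  have block_run: "strat T (prefix (limit_word pre) (length (pre i) + k)) = tau T (foldl (rho T) m (take k (blk i)))"
    if "k \<le> length (blk i)" for i k
    using prefix_limit_word_block[OF that] run[of i] by (simp add: strat_def rho_star_def)
  show ?thesis
  proof
    show "inf_states (\<lambda>l. strat T (prefix (limit_word pre) l)) \<subseteq> tau T ` Z"
    proof
      fix s assume "s \<in> inf_states (\<lambda>l. strat T (prefix (limit_word pre) l))"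
      then obtain l where l: "length (pre 0) \<le> l" "strat T (prefix (limit_word pre) l) = s"
        unfolding inf_states_def INFM_nat_le by blast
      then obtain i k where ik: "k < length (blk i)" "l = length (pre i) + k" using in_block by blast
      then have "s = tau T (foldl (rho T) m (take k (blk i)))" using l(2) block_run[of k i] by simp
      moreover have "foldl (rho T) m (take k (blk i)) \<in> Z"
        using ik(1) blocks[of i] unfolding visited_conv_take by fastforce
      ultimately show "s \<in> tau T ` Z" by blast
    qed
  next
    show "tau T ` Z \<subseteq> inf_states (\<lambda>l. strat T (prefix (limit_word pre) l))"
    proof
      fix s assume "s \<in> tau T ` Z"
      then obtain z where z: "z \<in> Z" "s = tau T z" by blast
      have "\<exists>l\<ge>N. strat T (prefix (limit_word pre) l) = s" for N
      proof -
        obtain k where "k \<le> length (blk N)" "z = foldl (rho T) m (take k (blk N))"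
          using z(1) blocks[of N] unfolding visited_conv_take by blast
        then show ?thesis
          using block_run length_pre_ge[of N] z(2) by (intro exI[of _ "length (pre N) + k"]) simp
      qed
      then show "s \<in> inf_states (\<lambda>l. strat T (prefix (limit_word pre) l))"
        unfolding inf_states_def INFM_nat_le by simp
    qed
  qed
qed

lemma rabin_lang_limit_word_iff:
  assumes T: "fs_witness A T" and letters: "\<And>i. set (pre i) \<subseteq> alphabet A"
    and run: "\<And>i. rho_star T (pre i) = m" and blocks: "\<And>i. visited T m (blk i) = Z"
  shows "limit_word pre \<in> rabin_lang A \<longleftrightarrow> rabin_accepting (acc A) (tau T ` Z)"
proof -
  have word: "is_word A (limit_word pre)" unfolding is_word_def using limit_word_in letters by blast
  moreover have "is_gfg_strategy (rabin_accepting (acc A)) A (strat T)"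
    using T unfolding fs_witness_def by simp
  ultimately show ?thesis
    using inf_states_strat_limit_word[OF run blocks]
    unfolding is_gfg_strategy_def rabin_lang_def lang_def by auto
qed

end

section \<open>Recognizability by a GFG-NBW\<close>

lemma run_states:
  assumes "wf_aut B" "is_word B w" "is_run B w r"
  shows "r i \<in> states B"
proof (induction i)
  case 0
  then show ?case using assms unfolding wf_aut_def is_run_def by auto
next
  case (Suc i)
  have "r (Suc i) \<in> delta B (r i) (w i)" "w i \<in> alphabet B"
    using assms(2,3) unfolding is_run_def is_word_def by auto
  then show ?case using Suc assms(1) unfolding wf_aut_def by blast
qed

lemma buchi_accepting_inf_states_iff:
  assumes "finite S" "\<And>l. r l \<in> S"
  shows "buchi_accepting F (inf_states r) \<longleftrightarrow> (\<exists>\<^sub>\<infinity>l. r l \<in> F)"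
proof
  assume "buchi_accepting F (inf_states r)"
  then obtain f where "f \<in> F" "\<exists>\<^sub>\<infinity>l. r l = f"
    unfolding buchi_accepting_def inf_states_def by auto
  then show "\<exists>\<^sub>\<infinity>l. r l \<in> F" by (auto elim!: INFM_mono)
next
  assume "\<exists>\<^sub>\<infinity>l. r l \<in> F"
  then have "\<exists>\<^sub>\<infinity>l. \<exists>f\<in>S \<inter> F. r l = f" using assms(2) by (auto elim!: INFM_mono)
  moreover have "finite (S \<inter> F)" using assms(1) by simp
  ultimately have "\<exists>f\<in>S \<inter> F. \<exists>\<^sub>\<infinity>l. r l = f"
    using INFM_finite_Bex_distrib[of "S \<inter> F" "\<lambda>f l. r l = f"] by blast
  then show "buchi_accepting F (inf_states r)"
    unfolding buchi_accepting_def inf_states_def by auto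
qed

lemma gfg_buchi_lang_iff:
  assumes h: "is_gfg_strategy (buchi_accepting (acc B)) B h" and "wf_aut B" "is_word B w"
  shows "w \<in> buchi_lang B \<longleftrightarrow> (\<exists>\<^sub>\<infinity>l. h (prefix w l) \<in> acc B)"
proof -
  have run: "is_run B w (\<lambda>l. h (prefix w l))" using h assms(3) unfolding is_gfg_strategy_def by simp
  have "finite (states B)" using assms(2) unfolding wf_aut_def by simp
  then have "buchi_accepting (acc B) (inf_states (\<lambda>l. h (prefix w l))) \<longleftrightarrow>
      (\<exists>\<^sub>\<infinity>l. h (prefix w l) \<in> acc B)"
    using run_states[OF assms(2,3) run] by (rule buchi_accepting_inf_states_iff)
  then show ?thesis
    using h assms(3) run unfolding is_gfg_strategy_def buchi_lang_def lang_def by auto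
qed

lemma gfg_nbw_hits_accepting_in_power:
  assumes T: "fs_witness A T" and h: "is_gfg_strategy (buchi_accepting (acc B)) B h"
    and B: "wf_aut B" "alphabet B = alphabet A" "buchi_lang B = rabin_lang A"
    and v: "set v \<subseteq> alphabet A" "rho_star T v = m"
    and x: "set x \<subseteq> alphabet A" "x \<noteq> []" "foldl (rho T) m x = m"
    and acc_x: "rabin_accepting (acc A) (tau T ` visited T m x)"
  shows "\<exists>k l. length v < l \<and> l \<le> length (v @ concat (replicate (Suc k) x)) \<and>
           h (take l (v @ concat (replicate (Suc k) x))) \<in> acc B"
proof -
  define pre where "pre i = v @ concat (replicate i x)" for i
  interpret prefix_chain pre "\<lambda>_. x"
    by unfold_locales (simp_all add: pre_def append_concat_replicate x(2))
  have run: "rho_star T (pre i) = m" for i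
    using v(2) foldl_rho_power[OF x(3)] by (simp add: pre_def rho_star_def)
  have letters: "set (pre i) \<subseteq> alphabet A" for i using v(1) x(1) by (auto simp: pre_def)
  have "limit_word pre \<in> rabin_lang A"
    using rabin_lang_limit_word_iff[OF T letters run refl] acc_x by simp
  moreover have "is_word B (limit_word pre)"
    unfolding is_word_def B(2) using limit_word_in letters by blast
  ultimately have "\<exists>\<^sub>\<infinity>l. h (prefix (limit_word pre) l) \<in> acc B"
    using gfg_buchi_lang_iff[OF h B(1)] B(3) by simp
  then obtain l where l: "length v < l" "h (prefix (limit_word pre) l) \<in> acc B"
    unfolding INFM_nat by blast
  have "l \<le> length (pre l)" by (rule length_pre_ge)
  then have "prefix (limit_word pre) l = take l (pre l)" by (rule prefix_limit_word)
  moreover have "Suc (l - 1) = l" using l(1) by simp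
  ultimately show ?thesis
    using l \<open>l \<le> length (pre l)\<close> unfolding pre_def by (intro exI[of _ "l - 1"] exI[of _ l]) simp
qed

text \<open>The word \<open>p x\<^sup>k\<^sup>0 y x\<^sup>k\<^sup>1 y \<dots>\<close>, each \<open>k\<^sub>i\<close> chosen so that the Buechi strategy sees an
  accepting state within the \<open>i\<close>-th block of copies of \<open>x\<close>, lies in the language of \<open>B\<close>.\<close>
lemma accepting_loop_union_accepting:
  assumes T: "fs_witness A T" and B: "GFG_NBW B" "alphabet B = alphabet A" "buchi_lang B = rabin_lang A"
    and p: "set p \<subseteq> alphabet A" "rho_star T p = m"
    and x: "set x \<subseteq> alphabet A" "x \<noteq> []" "foldl (rho T) m x = m"
    and y: "set y \<subseteq> alphabet A" "foldl (rho T) m y = m"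
    and acc_x: "rabin_accepting (acc A) (tau T ` visited T m x)"
  shows "rabin_accepting (acc A) (tau T ` (visited T m x \<union> visited T m y))"
proof -
  obtain h where h: "is_gfg_strategy (buchi_accepting (acc B)) B h" and wfB: "wf_aut B"
    using B(1) unfolding GFG_NBW_def by blast
  let ?hit = "\<lambda>v k. \<exists>l. length v < l \<and> l \<le> length (v @ concat (replicate (Suc k) x)) \<and>
                 h (take l (v @ concat (replicate (Suc k) x))) \<in> acc B"
  define K where "K v = (SOME k. ?hit v k)" for v
  define blk where "blk v = concat (replicate (Suc (K v)) x) @ y" for v
  define pre where "pre = rec_nat p (\<lambda>_ v. v @ blk v)"
  have pre_simps: "pre 0 = p" "pre (Suc i) = pre i @ blk (pre i)" for i
    by (simp_all add: pre_def)
  interpret prefix_chain pre "\<lambda>i. blk (pre i)"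
    by unfold_locales (simp_all add: pre_simps blk_def x(2))
  have reach: "set (pre i) \<subseteq> alphabet A \<and> rho_star T (pre i) = m" for i
  proof (induction i)
    case (Suc i)
    then show ?case
      using x y foldl_rho_power[OF x(3)] by (auto simp: pre_simps blk_def rho_star_def)
  qed (use p in \<open>simp add: pre_simps\<close>)
  have hit: "?hit (pre i) (K (pre i))" for i
    unfolding K_def
    by (rule someI_ex, rule gfg_nbw_hits_accepting_in_power[OF T h wfB B(2,3) _ _ x acc_x])
      (use reach in simp_all)
  have blocks: "visited T m (blk (pre i)) = visited T m x \<union> visited T m y" for i
    by (simp only: blk_def visited_append foldl_rho_power[OF x(3)] visited_power[OF x(3)])
  have letters: "set (pre i) \<subseteq> alphabet A" and run: "rho_star T (pre i) = m" for i
    using reach by simp_all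
  have word: "is_word B (limit_word pre)"
    unfolding is_word_def B(2) using limit_word_in letters by blast
  have "\<exists>\<^sub>\<infinity>l. h (prefix (limit_word pre) l) \<in> acc B"
    unfolding INFM_nat
  proof
    fix N
    obtain l where l: "length (pre N) < l" "l \<le> length (pre (Suc N))"
      "h (take l (pre (Suc N))) \<in> acc B"
      using hit[of N] by (auto simp: pre_simps blk_def)
    have "prefix (limit_word pre) l = take l (pre (Suc N))" using l(2) by (rule prefix_limit_word)
    then show "\<exists>l>N. h (prefix (limit_word pre) l) \<in> acc B"
      using l length_pre_ge[of N] by (intro exI[of _ l]) simp
  qed
  then have "limit_word pre \<in> rabin_lang A"
    using gfg_buchi_lang_iff[OF h wfB word] B(3) by simp
  then show ?thesis
    using rabin_lang_limit_word_iff[OF T letters run blocks] by simp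
qed

lemma strongly_tight_exclusive_loop:
  assumes T: "strongly_tight_wrt A T" and q: "q \<in> states A" "(E, F) \<in> acc A" "q \<in> F"
  shows "\<exists>m x. m \<in> mems T \<and> tau T m = q \<and> set x \<subseteq> alphabet A \<and> x \<noteq> [] \<and>
           foldl (rho T) m x = m \<and> rabin_accepting (acc A) (tau T ` visited T m x) \<and>
           \<not> rabin_accepting (acc A) (tau T ` visited T m x - {q})"
proof -
  have "\<exists>(E, F)\<in>acc A. q \<in> F" using q(2,3) by blast
  then have "excl_accepting_cycle A T q" using T q(1) unfolding strongly_tight_wrt_def by simp
  then obtain D where D: "mcycle A T D" "rabin_accepting (acc_g A T) (set D)"
      "\<not> rabin_accepting (acc_g A T) (set D - {m. tau T m = q})"
    unfolding excl_accepting_cycle_def by blast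
  have "set D - {m. tau T m = q} \<noteq> set D" using D(2,3) by auto
  then obtain m where m: "m \<in> set D" "tau T m = q" by blast
  have D_mems: "set D \<subseteq> mems T" using D(1) unfolding mcycle_def mpath_def by simp
  have "rabin_accepting (acc A) (tau T ` set D)"
    using D(2) rabin_accepting_acc_g[OF D_mems] by simp
  moreover have "tau T ` (set D - {m. tau T m = q}) = tau T ` set D - {q}" by auto
  then have "\<not> rabin_accepting (acc A) (tau T ` set D - {q})"
    using D(3) rabin_accepting_acc_g[of "set D - {m. tau T m = q}" T A] D_mems by auto
  moreover obtain x where "set x \<subseteq> alphabet A" "x \<noteq> []" "foldl (rho T) m x = m" "visited T m x = set D"
    using mcycle_loop_word[OF D(1) m(1)] by blast
  ultimately show ?thesis using m D_mems by (intro exI[of _ m] exI[of _ x]) auto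
qed

theorem lemma16:
  fixes A :: "('a, 'q) nrw" and B :: "('a, 'p) nbw"
  assumes "GFG_NRW A"
    and "strongly_tight A"
    and "GFG_NBW B"
    and "alphabet B = alphabet A"
    and "buchi_lang B = rabin_lang A"
    and "q \<in> states A"
    and "(E, F) \<in> acc A" and "q \<in> F"
  shows "\<not> (\<exists>qs. rejecting_cycle A qs \<and> q \<in> set qs)"
proof
  assume "\<exists>qs. rejecting_cycle A qs \<and> q \<in> set qs"
  then obtain qs where qs: "rejecting_cycle A qs" "q \<in> set qs" by blast
  obtain T :: "('a, 'q, nat) transducer" where T: "strongly_tight_wrt A T"
    using assms(2) unfolding strongly_tight_def by blast
  then have tight: "tight_wrt A T" unfolding strongly_tight_wrt_def by simp
  then have fsw: "fs_witness A T" unfolding tight_wrt_def by simp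
  obtain m x where m: "m \<in> mems T" "tau T m = q" and x: "set x \<subseteq> alphabet A" "x \<noteq> []"
      "foldl (rho T) m x = m" "rabin_accepting (acc A) (tau T ` visited T m x)"
      "\<not> rabin_accepting (acc A) (tau T ` visited T m x - {q})"
    using strongly_tight_exclusive_loop[OF T assms(6-8)] by blast
  obtain V where V: "walk A T m m V" "set qs \<subseteq> tau T ` V"
      "covered_by_rejecting (acc A) (set qs) (tau T ` V)"
    using tight_rejecting_cycle_loop[OF tight qs(1) m(1)] m(2) qs(2) by blast
  then obtain y where y: "set y \<subseteq> alphabet A" "foldl (rho T) m y = m" "visited T m y = V"
    unfolding walk_def by blast
  obtain u where "set u \<subseteq> alphabet A" "strat T u = q"
    using tight_cycle_state_visited[OF tight _ qs(2)] qs(1) unfolding rejecting_cycle_def by blast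
  then obtain p where p: "set p \<subseteq> alphabet A" "rho_star T p = m"
    using tight_memory_reachable[OF tight _ m(1)] m(2) by auto
  have "\<not> rabin_accepting (acc A) (tau T ` visited T m x \<union> tau T ` V)"
    using rabin_rejecting_Un[OF x(5) _ V(2) _ V(3)] qs V(2) unfolding rejecting_cycle_def by auto
  moreover have "rabin_accepting (acc A) (tau T ` visited T m x \<union> tau T ` V)"
    using accepting_loop_union_accepting[OF fsw assms(3-5) p x(1-3) y(1,2) x(4)] y(3)
    by (simp add: image_Un)
  ultimately show False by simp
qed

end
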